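(* Let $\mathcal{P}_1,\mathcal{P}_2\subseteq\mathbb{R}^n$ be non-empty not necessarily closed (NNC) convex polyhedra. Suppose there exist a linear constraint $\beta=(\langle\mathbf{a},\mathbf{x}\rangle\bowtie b)$ with $\mathbf{a}\neq\mathbf{0}$ and $\bowtie\in\{<,\le\}$, and a vector $\mathbf{p}\in\mathbb{R}^n$ such that: (1) $\mathbf{p}$ saturates $\beta$, i.e., $\langle\mathbf{a},\mathbf{p}\rangle=b$; (2) every point of $\mathcal{P}_1$ satisfies $\beta$, while some point of $\mathcal{P}_2$ violates $\beta$; (3) $\mathbf{p}\in\mathbb{C}(\mathcal{P}_1)\setminus\mathbb{C}(\mathcal{P}_2)$. Then $\mathcal{P}_1\uplus\mathcal{P}_2\neq\mathcal{P}_1\cup\mathcal{P}_2$.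
   Context: An NNC convex polyhedron in $\mathbb{R}^n$ is the set of solutions of a finite system of strict ($\langle\mathbf{a},\mathbf{x}\rangle<b$) and non-strict ($\langle\mathbf{a},\mathbf{x}\rangle\le b$) linear inequalities with $\mathbf{a}\neq\mathbf{0}$. $\mathbb{C}(S)$ denotes the topological closure of $S\subseteq\mathbb{R}^n$. $\mathcal{P}_1\uplus\mathcal{P}_2$ denotes the smallest NNC polyhedron containing $\mathcal{P}_1\cup\mathcal{P}_2$ (the NNC convex polyhedral hull). *)

theory Defs
  imports "HOL-Analysis.Analysis"
begin

definition sat_constraint :: "('a::euclidean_space \<times> real \<times> bool) \<Rightarrow> 'a \<Rightarrow> bool" where
  "sat_constraint c x = (case c of (a, b, s) \<Rightarrow> (if s then a \<bullet> x < b else a \<bullet> x \<le> b))"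

definition nnc_polyhedron :: "'a::euclidean_space set \<Rightarrow> bool" where
  "nnc_polyhedron P \<longleftrightarrow>
     (\<exists>C. finite C \<and> (\<forall>(a, b, s) \<in> C. a \<noteq> 0) \<and> P = {x. \<forall>c\<in>C. sat_constraint c x})"

definition nnc_hull :: "'a::euclidean_space set \<Rightarrow> 'a set \<Rightarrow> 'a set" where
  "nnc_hull P1 P2 = \<Inter> {Q. nnc_polyhedron Q \<and> P1 \<union> P2 \<subseteq> Q}"

end

theory Submission
  imports Defs
begin

text \<open>Let q be a point of P2 violating the constraint. If the NNC hull were the union,
  the half-open segment from p to q would lie in it, because p is in the closure of P1 and
  NNC polyhedra absorb such segments. Every point of that segment other than p violates
  the constraint, since p saturates it and q violates it; so the segment avoids P1 and lies
  in P2. Then p is in the closure of P2, a contradiction.\<close>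

lemma sat_constraint_segment:
  fixes x y :: "'a::euclidean_space"
  assumes "a \<bullet> x \<le> b" and "sat_constraint (a, b, s) y" and "0 < t" and "t \<le> 1"
  shows "sat_constraint (a, b, s) ((1 - t) *\<^sub>R x + t *\<^sub>R y)"
proof -
  have eq: "a \<bullet> ((1 - t) *\<^sub>R x + t *\<^sub>R y) = (1 - t) * (a \<bullet> x) + t * (a \<bullet> y)"
    by (simp add: inner_add_right)
  have x: "(1 - t) * (a \<bullet> x) \<le> (1 - t) * b"
    using assms(1,4) by (simp add: mult_left_mono)
  show ?thesis
  proof (cases s)
    case True
    then have "t * (a \<bullet> y) < t * b"
      using assms(2,3) by (simp add: sat_constraint_def)
    with x show ?thesis by (simp add: True eq sat_constraint_def algebra_simps)
  next
    case False
    then have "t * (a \<bullet> y) \<le> t * b"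
      using assms(2,3) by (simp add: sat_constraint_def mult_left_mono)
    with x show ?thesis by (simp add: False eq sat_constraint_def algebra_simps)
  qed
qed

lemma not_sat_constraint_segment:
  fixes p q :: "'a::euclidean_space"
  assumes "a \<bullet> p = b" and "\<not> sat_constraint (a, b, s) q" and "0 < t"
  shows "\<not> sat_constraint (a, b, s) ((1 - t) *\<^sub>R p + t *\<^sub>R q)"
proof -
  have eq: "a \<bullet> ((1 - t) *\<^sub>R p + t *\<^sub>R q) = b + t * (a \<bullet> q - b)"
    using assms(1) by (simp add: inner_add_right algebra_simps)
  show ?thesis
  proof (cases s)
    case True
    then have "0 \<le> t * (a \<bullet> q - b)"
      using assms(2,3) by (simp add: sat_constraint_def)
    then show ?thesis by (simp add: True eq sat_constraint_def)
  next
    case False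
    then have "0 < t * (a \<bullet> q - b)"
      using assms(2,3) by (simp add: sat_constraint_def)
    then show ?thesis by (simp add: False eq sat_constraint_def)
  qed
qed

lemma nnc_polyhedron_closure_segment:
  fixes Q :: "'a::euclidean_space set"
  assumes "nnc_polyhedron Q" and "x \<in> closure Q" and "y \<in> Q" and "0 < t" and "t \<le> 1"
  shows "(1 - t) *\<^sub>R x + t *\<^sub>R y \<in> Q"
proof -
  obtain C where C: "Q = {z. \<forall>c\<in>C. sat_constraint c z}"
    using assms(1) unfolding nnc_polyhedron_def by blast
  have "sat_constraint (a, b, s) ((1 - t) *\<^sub>R x + t *\<^sub>R y)" if "(a, b, s) \<in> C" for a b s
  proof (rule sat_constraint_segment)
    have "Q \<subseteq> {z. a \<bullet> z \<le> b}"
      using C that by (auto simp: sat_constraint_def split: if_splits)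
    then have "closure Q \<subseteq> {z. a \<bullet> z \<le> b}"
      by (simp add: closed_halfspace_le closure_minimal)
    then show "a \<bullet> x \<le> b" using assms(2) by auto
    show "sat_constraint (a, b, s) y" using assms(3) C that by auto
  qed (use assms(4,5) in auto)
  then show ?thesis using C by auto
qed

lemma closure_segment_in_nnc_hull:
  fixes P1 P2 :: "'a::euclidean_space set"
  assumes "x \<in> closure (P1 \<union> P2)" and "y \<in> P1 \<union> P2" and "0 < t" and "t \<le> 1"
  shows "(1 - t) *\<^sub>R x + t *\<^sub>R y \<in> nnc_hull P1 P2"
  unfolding nnc_hull_def
proof (rule InterI)
  fix Q assume "Q \<in> {Q. nnc_polyhedron Q \<and> P1 \<union> P2 \<subseteq> Q}"
  then have Q: "nnc_polyhedron Q" "P1 \<union> P2 \<subseteq> Q" by auto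
  then have "x \<in> closure Q" using assms(1) closure_mono by blast
  then show "(1 - t) *\<^sub>R x + t *\<^sub>R y \<in> Q"
    using nnc_polyhedron_closure_segment[OF Q(1) _ _ assms(3,4)] assms(2) Q(2) by blast
qed

lemma closure_half_open_segment:
  fixes p q :: "'a::euclidean_space"
  assumes "\<And>t. 0 < t \<Longrightarrow> t \<le> 1 \<Longrightarrow> (1 - t) *\<^sub>R p + t *\<^sub>R q \<in> S"
  shows "p \<in> closure S"
proof (cases "p = q")
  case True
  then show ?thesis using assms[of 1] closure_subset by auto
next
  case False
  have "open_segment p q \<subseteq> S"
    using assms by (auto simp: in_segment)
  then have "closure (open_segment p q) \<subseteq> closure S"
    by (rule closure_mono)
  then show ?thesis using False ends_in_segment(1) by auto
qed

theorem lemma2: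
  fixes P1 P2 :: "(real ^ 'n) set" and a p :: "real ^ 'n" and b :: real and s :: bool
  assumes "nnc_polyhedron P1" and "nnc_polyhedron P2"
    and "P1 \<noteq> {}" and "P2 \<noteq> {}"
    and "a \<noteq> 0"
    and "a \<bullet> p = b"
    and "\<forall>x\<in>P1. sat_constraint (a, b, s) x"
    and "\<exists>x\<in>P2. \<not> sat_constraint (a, b, s) x"
    and "p \<in> closure P1" and "p \<notin> closure P2"
  shows "nnc_hull P1 P2 \<noteq> P1 \<union> P2"
proof
  assume hull: "nnc_hull P1 P2 = P1 \<union> P2"
  obtain q where q: "q \<in> P2" "\<not> sat_constraint (a, b, s) q"
    using assms(8) by blast
  have "(1 - t) *\<^sub>R p + t *\<^sub>R q \<in> P2" if "0 < t" "t \<le> 1" for t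
  proof -
    have "p \<in> closure (P1 \<union> P2)" using assms(9) closure_mono by blast
    then have "(1 - t) *\<^sub>R p + t *\<^sub>R q \<in> P1 \<union> P2"
      using closure_segment_in_nnc_hull[OF _ _ that] q(1) hull by blast
    moreover have "(1 - t) *\<^sub>R p + t *\<^sub>R q \<notin> P1"
      using not_sat_constraint_segment[OF assms(6) q(2) that(1)] assms(7) by blast
    ultimately show ?thesis by blast
  qed
  then have "p \<in> closure P2" by (rule closure_half_open_segment)
  with assms(10) show False by contradiction
qed

end
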